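(* Let $G=(V,E)$ be a $2$-edge-strongly biconnected directed graph with $n=|V|$, and let $U\subseteq E$ be an optimal solution of the minimum $2$-edge-strongly biconnected spanning subgraph problem on $G$, i.e. $U$ is a minimum-size subset of $E$ such that $(V,U)$ is $2$-edge-strongly biconnected. Then $(V,U)$ has at least $2n$ edges.
   Context: A directed graph is strongly biconnected if it is strongly connected and its underlying undirected graph (ignoring edge directions) is biconnected. A strongly biconnected directed graph $G=(V,E)$ is $2$-edge-strongly biconnected if it has at least three vertices and $(V,E\setminus\{e\})$ is strongly biconnected for every $e\in E$. *)

theory Defs
  imports Main
begin

definition digraph :: "'a set \<Rightarrow> ('a \<times> 'a) set \<Rightarrow> bool" where
  "digraph V E \<longleftrightarrow> finite V \<and> E \<subseteq> V \<times> V"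

definition strongly_connected :: "'a set \<Rightarrow> ('a \<times> 'a) set \<Rightarrow> bool" where
  "strongly_connected V E \<longleftrightarrow> (\<forall>u\<in>V. \<forall>v\<in>V. (u, v) \<in> E\<^sup>*)"

definition und_restr :: "('a \<times> 'a) set \<Rightarrow> 'a set \<Rightarrow> ('a \<times> 'a) set" where
  "und_restr E W = {(x, y). ((x, y) \<in> E \<or> (y, x) \<in> E) \<and> x \<in> W \<and> y \<in> W}"

definition und_connected :: "'a set \<Rightarrow> ('a \<times> 'a) set \<Rightarrow> bool" where
  "und_connected W E \<longleftrightarrow> (\<forall>u\<in>W. \<forall>v\<in>W. (u, v) \<in> (und_restr E W)\<^sup>*)"

definition und_biconnected :: "'a set \<Rightarrow> ('a \<times> 'a) set \<Rightarrow> bool" where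
  "und_biconnected V E \<longleftrightarrow> und_connected V E \<and> (\<forall>v\<in>V. und_connected (V - {v}) E)"

definition strongly_biconnected :: "'a set \<Rightarrow> ('a \<times> 'a) set \<Rightarrow> bool" where
  "strongly_biconnected V E \<longleftrightarrow> strongly_connected V E \<and> und_biconnected V E"

definition two_edge_strongly_biconnected :: "'a set \<Rightarrow> ('a \<times> 'a) set \<Rightarrow> bool" where
  "two_edge_strongly_biconnected V E \<longleftrightarrow>
     strongly_biconnected V E \<and> card V \<ge> 3 \<and>
     (\<forall>e\<in>E. strongly_biconnected V (E - {e}))"

end

theory Submission
  imports Defs
begin

text \<open>Deleting any single edge keeps the graph strongly connected, so every vertex
  has at least two out-neighbours other than itself (the first one found is cut off
  by deleting its edge, and strong connectivity then yields a second). Counting the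
  edges by their tails gives at least \<open>2 n\<close> of them.\<close>

definition two_edge_strongly_connected :: "'a set \<Rightarrow> ('a \<times> 'a) set \<Rightarrow> bool" where
  "two_edge_strongly_connected V F \<longleftrightarrow>
     strongly_connected V F \<and> (\<forall>e\<in>F. strongly_connected V (F - {e}))"

definition out_nbrs :: "('a \<times> 'a) set \<Rightarrow> 'a \<Rightarrow> 'a set" where
  "out_nbrs F v = {w. (v, w) \<in> F \<and> w \<noteq> v}"

lemma two_edge_strongly_connected_if_two_edge_strongly_biconnected:
  "two_edge_strongly_biconnected V F \<Longrightarrow> two_edge_strongly_connected V F"
  unfolding two_edge_strongly_biconnected_def two_edge_strongly_connected_def
    strongly_biconnected_def by blast

lemma rtrancl_imp_out_nbr:
  assumes "(x, y) \<in> F\<^sup>*" "x \<noteq> y"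
  shows "\<exists>w. w \<in> out_nbrs F x"
  using assms unfolding out_nbrs_def
  by (induction rule: converse_rtrancl_induct) auto

lemma strongly_connected_imp_out_nbr:
  assumes "strongly_connected V F" "u \<in> V" "v \<in> V" "u \<noteq> v"
  shows "\<exists>w. w \<in> out_nbrs F v"
  using assms rtrancl_imp_out_nbr[of v u F] unfolding strongly_connected_def by blast

lemma finite_out_nbrs: "finite F \<Longrightarrow> finite (out_nbrs F v)"
  unfolding out_nbrs_def
  by (rule finite_subset[of _ "snd ` F"]) force+

lemma card_out_nbrs_ge_2:
  assumes "two_edge_strongly_connected V F" "finite F" "u \<in> V" "v \<in> V" "u \<noteq> v"
  shows "card (out_nbrs F v) \<ge> 2"
proof -
  have sc: "strongly_connected V F" and sc_minus: "\<And>e. e \<in> F \<Longrightarrow> strongly_connected V (F - {e})"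
    using assms(1) unfolding two_edge_strongly_connected_def by auto
  obtain w1 where w1: "w1 \<in> out_nbrs F v"
    using strongly_connected_imp_out_nbr[OF sc assms(3-5)] by blast
  then have "(v, w1) \<in> F" unfolding out_nbrs_def by simp
  then obtain w2 where w2: "w2 \<in> out_nbrs (F - {(v, w1)}) v"
    using strongly_connected_imp_out_nbr[OF sc_minus assms(3-5)] by blast
  have "{w1, w2} \<subseteq> out_nbrs F v" "card {w1, w2} = 2"
    using w1 w2 unfolding out_nbrs_def by auto
  then show ?thesis
    using card_mono[OF finite_out_nbrs[OF assms(2)]] by metis
qed

lemma sum_card_out_nbrs_le_card:
  assumes "finite V" "finite F"
  shows "(\<Sum>v\<in>V. card (out_nbrs F v)) \<le> card F"
proof -
  have "(\<Sum>v\<in>V. card (out_nbrs F v)) = card (Sigma V (out_nbrs F))"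
    using assms by (simp add: finite_out_nbrs)
  also have "\<dots> \<le> card F"
    using assms(2) by (rule card_mono) (auto simp: out_nbrs_def)
  finally show ?thesis .
qed

lemma card_edges_ge_twice_card_vertices:
  assumes "two_edge_strongly_connected V F" "finite V" "finite F" "card V \<ge> 2"
  shows "card F \<ge> 2 * card V"
proof -
  have out_degree: "card (out_nbrs F v) \<ge> 2" if "v \<in> V" for v
  proof -
    have "card (V - {v}) = card V - 1"
      using that by (rule card_Diff_singleton)
    then have "card (V - {v}) \<noteq> 0"
      using assms(4) by simp
    then obtain u where "u \<in> V - {v}"
      by (metis card.empty ex_in_conv)
    then show ?thesis
      using card_out_nbrs_ge_2[OF assms(1,3) _ that] by blast
  qed
  have "2 * card V = (\<Sum>v\<in>V. 2)" by simp
  also have "\<dots> \<le> (\<Sum>v\<in>V. card (out_nbrs F v))"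
    using out_degree by (rule sum_mono)
  also have "\<dots> \<le> card F"
    using assms(2,3) by (rule sum_card_out_nbrs_le_card)
  finally show ?thesis .
qed

text \<open>Only \<open>U \<subseteq> E \<subseteq> V \<times> V\<close> and the 2-edge strong connectivity of \<open>(V, U)\<close> are used:
  the bound holds for every 2-edge-strongly biconnected subgraph, optimal or not.\<close>

theorem mainTheorem3:
  fixes V :: "'a set" and E U :: "('a \<times> 'a) set"
  assumes "digraph V E"
    and "two_edge_strongly_biconnected V E"
    and "U \<subseteq> E"
    and "two_edge_strongly_biconnected V U"
    and "\<forall>U'. U' \<subseteq> E \<and> two_edge_strongly_biconnected V U' \<longrightarrow> card U \<le> card U'"
  shows "card U \<ge> 2 * card V"
proof -
  have "finite V" and "U \<subseteq> V \<times> V"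
    using assms(1,3) unfolding digraph_def by auto
  then have "finite U"
    using finite_subset by blast
  have "card V \<ge> 2"
    using assms(4) unfolding two_edge_strongly_biconnected_def by simp
  show ?thesis
    by (rule card_edges_ge_twice_card_vertices
        [OF two_edge_strongly_connected_if_two_edge_strongly_biconnected[OF assms(4)]
          \<open>finite V\<close> \<open>finite U\<close> \<open>card V \<ge> 2\<close>])
qed

end
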